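(* Let $(X,d)$ be a complete metric space and $\mathcal S$ a semigroup such that the action $(\mathcal S,X)$ is strong-orbit $k$-Lipschitzian with $k<\kappa(X)$. Then either all the orbits are unbounded or there exists $x\in X$ such that $sx=x$ for all $s\in\mathcal S$.
   Context: A semigroup action is a map $\mathcal S\times X\to X$, $(s,x)\mapsto sx$, with $(st)x=s(tx)$. The orbit of $x$ is $o(x)=\{x\}\cup\{sx:s\in\mathcal S\}$; for nonempty $C\subseteq X$, $D(x,C)=\sup\{d(x,y):y\in C\}$. The action is strong-orbit $k$-Lipschitzian ($k>0$) if $D(sx,o(sy))\le k\,D(x,o(y))$ for all $s\in\mathcal S$, $x,y\in X$. $B(x,r)$ denotes the closed ball. For $c\ge1$, balls in $X$ are $c$-regular if for every $k'<c$ there are $\mu,\alpha\in(0,1)$ such that for all $x,y\in X$ and $r>0$ with $d(x,y)\ge(1-\mu)r$ there exists $z\in X$ with $B(x,(1+\mu)r)\cap B(y,k'(1+\mu)r)\subseteq B(z,\alpha r)$. The Lifschitz characteristic is $\kappa(X)=\sup\{c\ge1:\text{balls in }X\text{ are }c\text{-regular}\}$. *)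

theory Defs
  imports "HOL-Analysis.Analysis" "HOL-Library.Extended_Real"
begin

definition is_action :: "('b::semigroup_mult \<Rightarrow> 'a \<Rightarrow> 'a) \<Rightarrow> bool" where
  "is_action act \<longleftrightarrow> (\<forall>s t x. act (s * t) x = act s (act t x))"

definition orbit :: "('b \<Rightarrow> 'a \<Rightarrow> 'a) \<Rightarrow> 'a \<Rightarrow> 'a set" where
  "orbit act x = insert x (range (\<lambda>s. act s x))"

definition Dsup :: "'a::metric_space \<Rightarrow> 'a set \<Rightarrow> ereal" where
  "Dsup x C = (SUP y\<in>C. ereal (dist x y))"

definition strong_orbit_lipschitzian :: "real \<Rightarrow> ('b \<Rightarrow> 'a::metric_space \<Rightarrow> 'a) \<Rightarrow> bool" where
  "strong_orbit_lipschitzian k act \<longleftrightarrow> k > 0 \<and>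
     (\<forall>s x y. Dsup (act s x) (orbit act (act s y)) \<le> ereal k * Dsup x (orbit act y))"

definition balls_regular :: "'a::metric_space itself \<Rightarrow> real \<Rightarrow> bool" where
  "balls_regular _ c \<longleftrightarrow> (\<forall>k'<c. \<exists>\<mu> \<alpha>. 0 < \<mu> \<and> \<mu> < 1 \<and> 0 < \<alpha> \<and> \<alpha> < 1 \<and>
     (\<forall>(x::'a) y r. r > 0 \<and> dist x y \<ge> (1 - \<mu>) * r \<longrightarrow>
        (\<exists>z. cball x ((1 + \<mu>) * r) \<inter> cball y (k' * (1 + \<mu>) * r) \<subseteq> cball z (\<alpha> * r))))"

definition lifschitz_char :: "'a::metric_space itself \<Rightarrow> ereal" where
  "lifschitz_char T = Sup (ereal ` {c. c \<ge> 1 \<and> balls_regular T c})"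

end

theory Submission
  imports Defs
begin

text \<open>
  Let \<open>r(y)\<close> be the Chebyshev radius of the orbit of \<open>y\<close> and let \<open>o(y) \<subseteq> B(z, (1 + \<mu>) r(y))\<close>.
  Either every \<open>s\<close> moves \<open>z\<close> by less than \<open>(1 - \<mu>) r(y)\<close>, and then \<open>r(z) \<le> (1 - \<mu>) r(y)\<close>;
  or some \<open>s\<close> moves \<open>z\<close> at least that far, and then \<open>o(sy)\<close> lies in
  \<open>B(z, (1 + \<mu>) r(y)) \<inter> B(sz, k (1 + \<mu>) r(y))\<close> by the Lipschitz condition, so regularity of
  balls gives \<open>r(sy) \<le> \<alpha> r(y)\<close>. Either way a step of length at most \<open>4 r(y)\<close> shrinks the
  orbit radius by the factor \<open>max \<alpha> (1 - \<mu>) < 1\<close>. Iterating from a bounded orbit gives a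
  Cauchy sequence, and the Lipschitz condition shows that its limit is fixed by every \<open>s\<close>.
\<close>

text \<open>For unbounded \<open>A\<close> the infimum is taken over the empty set, so the value is junk.\<close>
definition chebyshev_radius :: "'a::metric_space set \<Rightarrow> real" where
  "chebyshev_radius A = Inf {r. 0 \<le> r \<and> (\<exists>z. A \<subseteq> cball z r)}"

lemma chebyshev_radius_le:
  assumes "A \<subseteq> cball z r" "0 \<le> r"
  shows "chebyshev_radius A \<le> r"
  unfolding chebyshev_radius_def
  by (rule cInf_lower) (use assms in \<open>auto intro!: bdd_belowI[where m = 0]\<close>)

lemma chebyshev_radius_nonneg:
  assumes "bounded A"
  shows "0 \<le> chebyshev_radius A"
  unfolding chebyshev_radius_def
  by (rule cInf_greatest) (use assms in \<open>auto simp: bounded_subset_cball\<close>)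

lemma chebyshev_radius_covers:
  assumes "bounded A" "chebyshev_radius A < r"
  obtains z where "A \<subseteq> cball z r"
proof -
  have "{r. 0 \<le> r \<and> (\<exists>z. A \<subseteq> cball z r)} \<noteq> {}"
    using assms(1) by (auto simp: bounded_subset_cball)
  from cInf_lessD[OF this assms(2)[unfolded chebyshev_radius_def]]
  obtain r' z where "r' < r" "A \<subseteq> cball z r'"
    by auto
  then show thesis
    using that subset_cball[of r' r z] by auto
qed

lemma dist_le_chebyshev_radius:
  assumes "bounded A" "a \<in> A" "b \<in> A"
  shows "dist a b \<le> 2 * chebyshev_radius A"
proof -
  have "dist a b / 2 \<le> r" if r: "chebyshev_radius A < r" for r
  proof -
    obtain z where "A \<subseteq> cball z r"
      using chebyshev_radius_covers[OF assms(1) r] .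
    then have "dist z a \<le> r" "dist z b \<le> r"
      using assms(2,3) by auto
    then show ?thesis
      using dist_triangle3[of a b z] by linarith
  qed
  then have "dist a b / 2 \<le> chebyshev_radius A"
    by (rule dense_ge)
  then show ?thesis
    by linarith
qed

lemma Cauchy_if_summable_dist:
  fixes z :: "nat \<Rightarrow> 'a::metric_space"
  assumes "summable d" and "\<And>n. dist (z n) (z (Suc n)) \<le> d n"
  shows "Cauchy z"
proof (rule metric_CauchyI)
  have chain: "dist (z m) (z n) \<le> sum d {m..<n}" if "m \<le> n" for m n
    using that
  proof (induction n rule: dec_induct)
    case (step n)
    have "dist (z m) (z (Suc n)) \<le> dist (z m) (z n) + dist (z n) (z (Suc n))"
      by (rule dist_triangle)
    then show ?case
      using step.IH step.hyps assms(2)[of n] by simp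
  qed simp
  fix e :: real
  assume "0 < e"
  then obtain N where N: "\<forall>m\<ge>N. \<forall>n. norm (sum d {m..<n}) < e"
    using assms(1) summable_Cauchy by blast
  have close: "dist (z m) (z n) < e" if "N \<le> m" "m \<le> n" for m n
  proof -
    have "\<bar>sum d {m..<n}\<bar> < e"
      using N \<open>N \<le> m\<close> by simp
    then show ?thesis
      using chain[OF \<open>m \<le> n\<close>] abs_ge_self[of "sum d {m..<n}"] by linarith
  qed
  show "\<exists>M. \<forall>m\<ge>M. \<forall>n\<ge>M. dist (z m) (z n) < e"
  proof (intro exI allI impI)
    fix m n
    assume "N \<le> m" "N \<le> n"
    then show "dist (z m) (z n) < e"
      using close[of m n] close[of n m] by (cases "m \<le> n") (auto simp: dist_commute)
  qed
qed

lemma convergent_descent_sequence: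
  fixes \<rho> :: "'a::complete_space \<Rightarrow> real"
  assumes \<beta>: "0 \<le> \<beta>" "\<beta> < 1"
    and descent: "\<And>y. P y \<Longrightarrow> \<exists>y'. P y' \<and> \<rho> y' \<le> \<beta> * \<rho> y \<and> dist y y' \<le> C * \<rho> y"
    and nonneg: "\<And>y. P y \<Longrightarrow> 0 \<le> \<rho> y"
    and "P y0"
  obtains Y w where "\<And>n. P (Y n)" "(\<lambda>n. \<rho> (Y n)) \<longlonglongrightarrow> 0" "Y \<longlonglongrightarrow> w"
proof -
  from descent have "\<forall>y. \<exists>y'. P y \<longrightarrow> P y' \<and> \<rho> y' \<le> \<beta> * \<rho> y \<and> dist y y' \<le> C * \<rho> y"
    by blast
  then obtain f where f: "\<forall>y. P y \<longrightarrow> P (f y) \<and> \<rho> (f y) \<le> \<beta> * \<rho> y \<and> dist y (f y) \<le> C * \<rho> y"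
    by (rule choice[THEN exE])
  define Y where "Y n = (f ^^ n) y0" for n
  have Y_Suc: "Y (Suc n) = f (Y n)" for n
    by (simp add: Y_def)
  have Y: "P (Y n) \<and> \<rho> (Y n) \<le> \<beta> ^ n * \<rho> y0" for n
  proof (induction n)
    case 0
    then show ?case
      using \<open>P y0\<close> by (simp add: Y_def)
  next
    case (Suc n)
    then have "P (Y (Suc n))" "\<rho> (Y (Suc n)) \<le> \<beta> * \<rho> (Y n)"
      using f by (simp_all add: Y_Suc)
    moreover have "\<beta> * \<rho> (Y n) \<le> \<beta> * (\<beta> ^ n * \<rho> y0)"
      using Suc \<beta> by (intro mult_left_mono) auto
    ultimately show ?case
      by simp
  qed
  have geometric: "(\<lambda>n. \<beta> ^ n * \<rho> y0) \<longlonglongrightarrow> 0"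
    using \<beta> by (intro tendsto_mult_left_zero LIMSEQ_power_zero) auto
  have radii: "(\<lambda>n. \<rho> (Y n)) \<longlonglongrightarrow> 0"
    by (rule real_tendsto_sandwich[OF always_eventually always_eventually tendsto_const geometric])
      (use Y nonneg in auto)
  have "dist (Y n) (Y (Suc n)) \<le> \<bar>C\<bar> * \<rho> y0 * \<beta> ^ n" for n
  proof -
    have "dist (Y n) (Y (Suc n)) \<le> C * \<rho> (Y n)"
      using f Y[of n] by (simp add: Y_Suc)
    also have "\<dots> \<le> \<bar>C\<bar> * (\<beta> ^ n * \<rho> y0)"
      using Y[of n] nonneg[of "Y n"] abs_ge_self[of C] by (intro mult_mono) auto
    finally show ?thesis
      by (simp add: ac_simps)
  qed
  moreover have "summable (\<lambda>n. \<bar>C\<bar> * \<rho> y0 * \<beta> ^ n)"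
    using \<beta> by (intro summable_mult summable_geometric) auto
  ultimately have "Cauchy Y"
    by (intro Cauchy_if_summable_dist)
  then obtain w where "Y \<longlonglongrightarrow> w"
    using Cauchy_convergent convergent_def by blast
  then show thesis
    using that Y radii by blast
qed

lemma orbit_self: "x \<in> orbit act x"
  by (simp add: orbit_def)

lemma act_in_orbit: "act s x \<in> orbit act x"
  by (simp add: orbit_def)

lemma orbit_act_subset:
  assumes "is_action act"
  shows "orbit act (act s x) \<subseteq> orbit act x"
  using assms by (auto simp: orbit_def is_action_def) (metis rangeI)

lemma strong_orbit_lipschitzian_cball:
  assumes L: "strong_orbit_lipschitzian k act" and "orbit act y \<subseteq> cball x r"
  shows "orbit act (act s y) \<subseteq> cball (act s x) (k * r)"
proof
  fix q
  assume q: "q \<in> orbit act (act s y)"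
  from L have "0 < k"
    and D: "Dsup (act s x) (orbit act (act s y)) \<le> ereal k * Dsup x (orbit act y)"
    by (auto simp: strong_orbit_lipschitzian_def)
  have "Dsup x (orbit act y) \<le> ereal r"
    using assms(2) unfolding Dsup_def by (intro SUP_least) auto
  have "ereal (dist (act s x) q) \<le> Dsup (act s x) (orbit act (act s y))"
    using q unfolding Dsup_def by (rule SUP_upper)
  also have "\<dots> \<le> ereal k * Dsup x (orbit act y)"
    by (rule D)
  also have "\<dots> \<le> ereal k * ereal r"
    using \<open>0 < k\<close> \<open>Dsup x (orbit act y) \<le> ereal r\<close> by (intro ereal_mult_left_mono) auto
  finally show "q \<in> cball (act s x) (k * r)"
    by simp
qed

lemma orbit_radius_descent:
  fixes act :: "'b::semigroup_mult \<Rightarrow> 'a::metric_space \<Rightarrow> 'a"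
  assumes A: "is_action act" and L: "strong_orbit_lipschitzian k act"
    and \<mu>: "0 < \<mu>" "\<mu> < 1" and "0 < \<alpha>"
    and regular: "\<forall>(x::'a) y r. r > 0 \<and> dist x y \<ge> (1 - \<mu>) * r \<longrightarrow>
        (\<exists>z. cball x ((1 + \<mu>) * r) \<inter> cball y (k * (1 + \<mu>) * r) \<subseteq> cball z (\<alpha> * r))"
    and B: "bounded (orbit act y)"
  shows "\<exists>y'. bounded (orbit act y') \<and>
    chebyshev_radius (orbit act y') \<le> max \<alpha> (1 - \<mu>) * chebyshev_radius (orbit act y) \<and>
    dist y y' \<le> 4 * chebyshev_radius (orbit act y)"
proof -
  define R where "R = chebyshev_radius (orbit act y)"
  have "0 \<le> R"
    unfolding R_def using B by (rule chebyshev_radius_nonneg)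
  show ?thesis
  proof (cases "R = 0")
    case True
    then show ?thesis
      using B by (intro exI[of _ y]) (simp add: R_def)
  next
    case False
    with \<open>0 \<le> R\<close> have "0 < R"
      by simp
    then have "chebyshev_radius (orbit act y) < (1 + \<mu>) * R"
      using \<mu> by (simp add: R_def)
    then obtain z where z: "orbit act y \<subseteq> cball z ((1 + \<mu>) * R)"
      using chebyshev_radius_covers[OF B] by blast
    have "(1 + \<mu>) * R \<le> 2 * R"
      using \<mu> \<open>0 < R\<close> by (intro mult_right_mono) auto
    have "dist y z \<le> (1 + \<mu>) * R"
      using z orbit_self[of y act] by (auto simp: dist_commute)
    have "(1 - \<mu>) * R \<le> max \<alpha> (1 - \<mu>) * R" "\<alpha> * R \<le> max \<alpha> (1 - \<mu>) * R"
      using \<open>0 < R\<close> by (auto intro: mult_right_mono)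
    show ?thesis
    proof (cases "\<forall>s. dist z (act s z) < (1 - \<mu>) * R")
      case True
      then have small: "orbit act z \<subseteq> cball z ((1 - \<mu>) * R)"
        using \<mu> \<open>0 < R\<close> by (auto simp: orbit_def less_imp_le)
      have "chebyshev_radius (orbit act z) \<le> (1 - \<mu>) * R"
        using small \<mu> \<open>0 < R\<close> by (intro chebyshev_radius_le) auto
      moreover have "bounded (orbit act z)"
        using small bounded_cball bounded_subset by blast
      moreover have "dist y z \<le> 4 * R"
        using \<open>dist y z \<le> (1 + \<mu>) * R\<close> \<open>(1 + \<mu>) * R \<le> 2 * R\<close> \<open>0 < R\<close> by linarith
      ultimately show ?thesis
        using \<open>(1 - \<mu>) * R \<le> max \<alpha> (1 - \<mu>) * R\<close> unfolding R_def[symmetric] by (intro exI[of _ z] conjI) (assumption | linarith)+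
    next
      case False
      then obtain s where "(1 - \<mu>) * R \<le> dist z (act s z)"
        by (auto simp: not_less)
      with regular \<open>0 < R\<close> obtain w where
        w: "cball z ((1 + \<mu>) * R) \<inter> cball (act s z) (k * (1 + \<mu>) * R) \<subseteq> cball w (\<alpha> * R)"
        by blast
      have "orbit act (act s y) \<subseteq> cball (act s z) (k * (1 + \<mu>) * R)"
        using strong_orbit_lipschitzian_cball[OF L z] by (simp add: mult.assoc)
      moreover have "orbit act (act s y) \<subseteq> cball z ((1 + \<mu>) * R)"
        using orbit_act_subset[OF A] z by blast
      ultimately have small: "orbit act (act s y) \<subseteq> cball w (\<alpha> * R)"
        using w by blast
      have "chebyshev_radius (orbit act (act s y)) \<le> \<alpha> * R"
        using small \<open>0 < \<alpha>\<close> \<open>0 < R\<close> by (intro chebyshev_radius_le) auto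
      moreover have "bounded (orbit act (act s y))"
        using small bounded_cball bounded_subset by blast
      moreover have "dist z (act s y) \<le> (1 + \<mu>) * R"
        using z act_in_orbit[of act s y] by auto
      then have "dist y (act s y) \<le> 4 * R"
        using \<open>dist y z \<le> (1 + \<mu>) * R\<close> \<open>(1 + \<mu>) * R \<le> 2 * R\<close> dist_triangle[of y "act s y" z]
        by linarith
      ultimately show ?thesis
        using \<open>\<alpha> * R \<le> max \<alpha> (1 - \<mu>) * R\<close> unfolding R_def[symmetric] by (intro exI[of _ "act s y"] conjI) (assumption | linarith)+
    qed
  qed
qed

lemma fixed_point_if_orbits_shrink:
  assumes L: "strong_orbit_lipschitzian k act"
    and B: "\<And>n. bounded (orbit act (Y n))"
    and shrink: "(\<lambda>n. chebyshev_radius (orbit act (Y n))) \<longlonglongrightarrow> 0"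
    and "Y \<longlonglongrightarrow> w"
  shows "act s w = w"
proof -
  define D where "D n = dist w (Y n) + 2 * chebyshev_radius (orbit act (Y n))" for n
  have bound: "dist (act s w) w \<le> (1 + k) * D n" for n
  proof -
    have "dist w p \<le> D n" if "p \<in> orbit act (Y n)" for p
      using dist_le_chebyshev_radius[OF B orbit_self that] dist_triangle[of w p "Y n"]
      unfolding D_def by linarith
    then have "orbit act (Y n) \<subseteq> cball w (D n)"
      by auto
    from subsetD[OF strong_orbit_lipschitzian_cball[OF L this] orbit_self]
    have "dist (act s w) (act s (Y n)) \<le> k * D n"
      by simp
    moreover have "dist (act s (Y n)) (Y n) \<le> 2 * chebyshev_radius (orbit act (Y n))"
      using B act_in_orbit orbit_self by (rule dist_le_chebyshev_radius)
    moreover have "(1 + k) * D n = D n + k * D n"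
      by (simp add: algebra_simps)
    ultimately show ?thesis
      using dist_triangle[of "act s w" w "act s (Y n)"] dist_triangle[of "act s (Y n)" w "Y n"]
      unfolding D_def by (simp add: dist_commute)
  qed
  have "(\<lambda>n. (1 + k) * D n) \<longlonglongrightarrow> (1 + k) * (dist w w + 2 * 0)"
    unfolding D_def by (intro tendsto_intros shrink \<open>Y \<longlonglongrightarrow> w\<close>)
  then have "dist (act s w) w \<le> (1 + k) * (dist w w + 2 * 0)"
    by (rule LIMSEQ_le_const) (use bound in blast)
  then show ?thesis
    by simp
qed

lemma lifschitz_char_greater_imp_regular:
  assumes "ereal k < lifschitz_char TYPE('a::metric_space)"
  obtains \<mu> \<alpha> where "0 < \<mu>" "\<mu> < 1" "0 < \<alpha>" "\<alpha> < 1"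
    "\<forall>(x::'a) y r. r > 0 \<and> dist x y \<ge> (1 - \<mu>) * r \<longrightarrow>
        (\<exists>z. cball x ((1 + \<mu>) * r) \<inter> cball y (k * (1 + \<mu>) * r) \<subseteq> cball z (\<alpha> * r))"
proof -
  from assms obtain c where "balls_regular TYPE('a) c" "k < c"
    unfolding lifschitz_char_def by (auto simp: less_Sup_iff)
  then show thesis
    using that unfolding balls_regular_def by blast
qed

theorem corollary4p2:
  fixes act :: "'b::semigroup_mult \<Rightarrow> 'a::{metric_space, complete_space} \<Rightarrow> 'a"
    and k :: real
  assumes "is_action act"
    and "strong_orbit_lipschitzian k act"
    and "ereal k < lifschitz_char TYPE('a)"
  shows "(\<forall>x. \<not> bounded (orbit act x)) \<or> (\<exists>x. \<forall>s. act s x = x)"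
proof (cases "\<exists>y. bounded (orbit act y)")
  case True
  then obtain y0 where "bounded (orbit act y0)"
    by blast
  obtain \<mu> \<alpha> where \<mu>: "0 < \<mu>" "\<mu> < 1" and \<alpha>: "0 < \<alpha>" "\<alpha> < 1"
    and regular: "\<forall>(x::'a) y r. r > 0 \<and> dist x y \<ge> (1 - \<mu>) * r \<longrightarrow>
        (\<exists>z. cball x ((1 + \<mu>) * r) \<inter> cball y (k * (1 + \<mu>) * r) \<subseteq> cball z (\<alpha> * r))"
    using lifschitz_char_greater_imp_regular[OF assms(3)] by blast
  have "0 \<le> max \<alpha> (1 - \<mu>)" "max \<alpha> (1 - \<mu>) < 1"
    using \<mu> \<alpha> by auto
  from convergent_descent_sequence[where P = "\<lambda>y. bounded (orbit act y)", OF this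
      orbit_radius_descent[OF assms(1,2) \<mu> \<alpha>(1) regular] chebyshev_radius_nonneg
      \<open>bounded (orbit act y0)\<close>]
  obtain Y w where "\<And>n. bounded (orbit act (Y n))"
    "(\<lambda>n. chebyshev_radius (orbit act (Y n))) \<longlonglongrightarrow> 0" "Y \<longlonglongrightarrow> w"
    by blast
  then have "\<forall>s. act s w = w"
    using fixed_point_if_orbits_shrink[OF assms(2)] by blast
  then show ?thesis
    by blast
qed blast

end
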